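(* Let $H$ be a graph. Then there is a full lc-sequence for $H$ if and only if each loopless connected component of $H$ consists of a single isolated vertex.
   Context: Graphs are finite, may have loops, but no multiple edges; an edge is either $\{u\}$ (a loop at $u$) or $\{u,w\}$ with $u\ne w$. A vertex is isolated if no edge (including a loop) is incident to it. A graph is loopless if no vertex is looped. For $v\in V(H)$, $N_H(v)=\{u\in V(H): u\neq v,\ \{u,v\}\in E(H)\}$. For a looped vertex $v$, the local complement $H*v$ is the graph on $V(H)$ such that for every $p\subseteq V(H)$ with $|p|\in\{1,2\}$: $p\in E(H*v)$ iff either ($p\notin E(H)$ and $p\subseteq N_H(v)$) or ($p\in E(H)$ and $p\not\subseteq N_H(v)$). $H*_c v$ (defined only when $v$ is looped) is obtained from $H*v$ by removing all edges incident to $v$, including its loop. For mutually distinct vertices $v_1,\dots,v_k$, the sequence $\varphi=*_c v_1 *_c v_2\cdots *_c v_k$ (applied left to right) is an lc-sequence for $H$ if each operation is applicable, i.e. $v_i$ is looped in $H*_c v_1\cdots *_c v_{i-1}$ for all $i$. It is full if the resulting graph $H\varphi$ consists only of isolated vertices. *)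

theory Defs
  imports Main
begin

definition graph :: "'a set \<Rightarrow> 'a set set \<Rightarrow> bool" where
  "graph V E \<longleftrightarrow> finite V \<and> (\<forall>e\<in>E. e \<subseteq> V \<and> (card e = 1 \<or> card e = 2))"

definition looped :: "'a set set \<Rightarrow> 'a \<Rightarrow> bool" where
  "looped E v \<longleftrightarrow> {v} \<in> E"

definition isolated :: "'a set set \<Rightarrow> 'a \<Rightarrow> bool" where
  "isolated E v \<longleftrightarrow> (\<forall>e\<in>E. v \<notin> e)"

definition nbhd :: "'a set \<Rightarrow> 'a set set \<Rightarrow> 'a \<Rightarrow> 'a set" where
  "nbhd V E v = {u\<in>V. u \<noteq> v \<and> {u, v} \<in> E}"

definition lc :: "'a set \<Rightarrow> 'a set set \<Rightarrow> 'a \<Rightarrow> 'a set set" where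
  "lc V E v = {p. p \<subseteq> V \<and> (card p = 1 \<or> card p = 2) \<and>
      ((p \<notin> E \<and> p \<subseteq> nbhd V E v) \<or> (p \<in> E \<and> \<not> p \<subseteq> nbhd V E v))}"

definition lcc :: "'a set \<Rightarrow> 'a set set \<Rightarrow> 'a \<Rightarrow> 'a set set" where
  "lcc V E v = {p \<in> lc V E v. v \<notin> p}"

fun lc_apply :: "'a set \<Rightarrow> 'a set set \<Rightarrow> 'a list \<Rightarrow> 'a set set" where
  "lc_apply V E [] = E"
| "lc_apply V E (v # vs) = lc_apply V (lcc V E v) vs"

fun lc_applicable :: "'a set \<Rightarrow> 'a set set \<Rightarrow> 'a list \<Rightarrow> bool" where
  "lc_applicable V E [] = True"
| "lc_applicable V E (v # vs) \<longleftrightarrow> looped E v \<and> lc_applicable V (lcc V E v) vs"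

definition lc_sequence :: "'a set \<Rightarrow> 'a set set \<Rightarrow> 'a list \<Rightarrow> bool" where
  "lc_sequence V E vs \<longleftrightarrow> distinct vs \<and> set vs \<subseteq> V \<and> lc_applicable V E vs"

definition full_lc_sequence :: "'a set \<Rightarrow> 'a set set \<Rightarrow> 'a list \<Rightarrow> bool" where
  "full_lc_sequence V E vs \<longleftrightarrow> lc_sequence V E vs \<and> (\<forall>v\<in>V. isolated (lc_apply V E vs) v)"

definition adj :: "'a set set \<Rightarrow> 'a \<Rightarrow> 'a \<Rightarrow> bool" where
  "adj E u w \<longleftrightarrow> u \<noteq> w \<and> {u, w} \<in> E"

definition component :: "'a set \<Rightarrow> 'a set set \<Rightarrow> 'a set \<Rightarrow> bool" where
  "component V E C \<longleftrightarrow> (\<exists>v\<in>V. C = {w\<in>V. (adj E)\<^sup>*\<^sup>* v w})"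

definition loopless_on :: "'a set set \<Rightarrow> 'a set \<Rightarrow> bool" where
  "loopless_on E C \<longleftrightarrow> (\<forall>v\<in>C. \<not> looped E v)"

end

theory Submission
  imports Defs
begin

text \<open>Call a vertex a bad root if it has a neighbour and its component is loopless; the
  components excluded by the theorem are exactly the components of bad roots.
  Such a component is never touched by an lc-sequence: every pivot is looped, hence lies outside
  the component and is not adjacent to it, and \<open>*\<^sub>c v\<close> only changes pairs inside
  \<open>N(v) \<union> {v}\<close>. So its edges survive and the sequence is not full.

  Conversely, induct on the number of non-isolated vertices: it suffices to find a looped pivot
  \<open>v\<close> such that \<open>H *\<^sub>c v\<close> has no bad root. If every looped pivot created one, choose
  \<open>v\<close> for which \<open>H *\<^sub>c v\<close> has a bad component \<open>K\<close> of least size. \<open>K\<close> contains a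
  neighbour \<open>u\<close> of \<open>v\<close>, which is looped in \<open>H\<close>, and every bad component of
  \<open>H *\<^sub>c u\<close> lies in \<open>K - {u}\<close>, contradicting minimality.\<close>

section \<open>Local complementation\<close>

lemma graph_pair_in_V: "graph V E \<Longrightarrow> {x, y} \<in> E \<Longrightarrow> x \<in> V \<and> y \<in> V"
  by (auto simp: graph_def)

lemma graph_edgeE:
  assumes "graph V E" "p \<in> E"
  obtains x y where "p = {x, y}"
proof -
  from assms have "card p = 1 \<or> card p = 2" by (auto simp: graph_def)
  then show ?thesis
    by (metis card_1_singletonE card_2_iff insert_absorb2 that)
qed

lemma isolated_iff_no_pair:
  assumes "graph V E"
  shows "isolated E w \<longleftrightarrow> (\<forall>y. {w, y} \<notin> E)"
proof
  show "\<forall>y. {w, y} \<notin> E" if "isolated E w"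
    using that unfolding isolated_def by blast
  show "isolated E w" if no_pair: "\<forall>y. {w, y} \<notin> E"
    unfolding isolated_def
  proof
    fix e assume "e \<in> E"
    with assms obtain x y where "e = {x, y}" by (rule graph_edgeE)
    with \<open>e \<in> E\<close> no_pair show "w \<notin> e" by (auto simp: insert_commute)
  qed
qed

lemma lcc_iff:
  "p \<in> lcc V E v \<longleftrightarrow>
     p \<subseteq> V \<and> (card p = 1 \<or> card p = 2) \<and> v \<notin> p \<and> (p \<in> E \<longleftrightarrow> \<not> p \<subseteq> nbhd V E v)"
  unfolding lcc_def lc_def by auto

lemma graph_lcc: "graph V E \<Longrightarrow> graph V (lcc V E v)"
  unfolding graph_def by (auto simp: lcc_iff)

lemma lcc_pair_iff:
  "{x, y} \<in> lcc V E v \<longleftrightarrow>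
     x \<in> V \<and> y \<in> V \<and> x \<noteq> v \<and> y \<noteq> v \<and> (({x, y} \<in> E) \<noteq> ({x, v} \<in> E \<and> {y, v} \<in> E))"
proof -
  have "card {x, y} = 1 \<or> card {x, y} = 2"
    by (cases "x = y") auto
  then show ?thesis
    unfolding lcc_iff nbhd_def by (auto simp: insert_commute)
qed

lemma lcc_adj_iff:
  "adj (lcc V E v) x y \<longleftrightarrow>
     x \<noteq> y \<and> x \<in> V \<and> y \<in> V \<and> x \<noteq> v \<and> y \<noteq> v \<and> (({x, y} \<in> E) \<noteq> ({x, v} \<in> E \<and> {y, v} \<in> E))"
  unfolding adj_def lcc_pair_iff by blast

lemma lcc_looped_iff:
  "looped (lcc V E v) x \<longleftrightarrow> x \<in> V \<and> x \<noteq> v \<and> (looped E x \<noteq> ({x, v} \<in> E))"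
  using lcc_pair_iff[of x x] unfolding looped_def by simp

lemma isolated_lcc:
  assumes "isolated E w"
  shows "isolated (lcc V E v) w"
  unfolding isolated_def
proof (intro ballI notI)
  fix p assume "p \<in> lcc V E v" "w \<in> p"
  moreover have "w \<notin> nbhd V E v" "p \<notin> E"
    using assms \<open>w \<in> p\<close> by (auto simp: isolated_def nbhd_def)
  ultimately show False by (auto simp: lcc_iff)
qed

lemma isolated_lcc_self: "isolated (lcc V E v) v"
  unfolding isolated_def by (simp add: lcc_iff)

definition agree_near :: "'a set set \<Rightarrow> 'a set set \<Rightarrow> 'a set \<Rightarrow> bool" where
  "agree_near E E' S \<longleftrightarrow> (\<forall>p. p \<inter> S \<noteq> {} \<longrightarrow> (p \<in> E \<longleftrightarrow> p \<in> E'))"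

lemma agree_near_sym: "agree_near E E' S \<longleftrightarrow> agree_near E' E S"
  unfolding agree_near_def by blast

lemma agree_near_trans: "agree_near E E' S \<Longrightarrow> agree_near E' E'' S \<Longrightarrow> agree_near E E'' S"
  unfolding agree_near_def by blast

lemma agree_nearI:
  assumes "graph V E" "graph V E'" "\<And>x y. x \<in> S \<Longrightarrow> {x, y} \<in> E \<longleftrightarrow> {x, y} \<in> E'"
  shows "agree_near E E' S"
  unfolding agree_near_def
proof (intro allI impI)
  fix p assume "p \<inter> S \<noteq> {}"
  then obtain x where "x \<in> p" "x \<in> S" by blast
  show "p \<in> E \<longleftrightarrow> p \<in> E'"
  proof (cases "p \<in> E \<or> p \<in> E'")
    case True
    then obtain a b where "p = {a, b}"
      using graph_edgeE assms(1,2) by metis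
    with \<open>x \<in> p\<close> obtain y where "p = {x, y}"
      by (auto simp: insert_commute)
    then show ?thesis using assms(3)[OF \<open>x \<in> S\<close>] by simp
  qed blast
qed

lemma lcc_agree_near:
  assumes "graph V E" "v \<notin> S" "\<And>x. x \<in> S \<Longrightarrow> {x, v} \<notin> E"
  shows "agree_near E (lcc V E v) S"
  unfolding agree_near_def
proof (intro allI impI)
  fix p assume "p \<inter> S \<noteq> {}"
  then obtain x where x: "x \<in> p" "x \<in> S" by blast
  then have "\<not> p \<subseteq> nbhd V E v"
    using assms(3) by (auto simp: nbhd_def insert_commute)
  moreover have "v \<notin> p" if "p \<in> E"
  proof
    assume "v \<in> p"
    obtain a b where "p = {a, b}" using graph_edgeE[OF assms(1) \<open>p \<in> E\<close>] .
    with x \<open>v \<in> p\<close> assms(2) have "p = {x, v}" by auto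
    with \<open>p \<in> E\<close> x assms(3) show False by blast
  qed
  ultimately show "p \<in> E \<longleftrightarrow> p \<in> lcc V E v"
    using assms(1) by (auto simp: lcc_iff graph_def)
qed

section \<open>Components and bad roots\<close>

definition component_of :: "'a set \<Rightarrow> 'a set set \<Rightarrow> 'a \<Rightarrow> 'a set" where
  "component_of V E k = {w \<in> V. (adj E)\<^sup>*\<^sup>* k w}"

lemma adj_sym: "adj E x y \<Longrightarrow> adj E y x"
  by (auto simp: adj_def insert_commute)

lemma adj_in_V: "graph V E \<Longrightarrow> adj E x y \<Longrightarrow> x \<in> V \<and> y \<in> V"
  by (auto simp: adj_def dest: graph_pair_in_V)

lemma component_of_self: "k \<in> V \<Longrightarrow> k \<in> component_of V E k"
  by (simp add: component_of_def)

lemma component_of_closed: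
  "graph V E \<Longrightarrow> x \<in> component_of V E k \<Longrightarrow> adj E x y \<Longrightarrow> y \<in> component_of V E k"
  unfolding component_of_def by (auto dest: adj_in_V)

lemma component_of_subset:
  assumes "graph V E" "k \<in> S" "\<And>x y. x \<in> component_of V E k \<Longrightarrow> x \<in> S \<Longrightarrow> adj E x y \<Longrightarrow> y \<in> S"
  shows "component_of V E k \<subseteq> S"
proof
  fix w assume "w \<in> component_of V E k"
  then have "(adj E)\<^sup>*\<^sup>* k w" by (simp add: component_of_def)
  then show "w \<in> S"
  proof (induction rule: rtranclp_induct)
    case (step y z)
    then have "y \<in> component_of V E k"
      using adj_in_V[OF assms(1)] by (auto simp: component_of_def)
    with step assms(3) show ?case by blast
  qed (fact assms(2))
qed

lemma component_of_adj:
  assumes "\<exists>y. adj E k y" "x \<in> component_of V E k"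
  shows "\<exists>y. adj E x y"
proof -
  from assms(2) have "(adj E)\<^sup>*\<^sup>* k x" by (simp add: component_of_def)
  then show ?thesis
    using assms(1) by (cases rule: rtranclp.cases) (blast dest: adj_sym)+
qed

lemma isolated_not_adj: "isolated E x \<Longrightarrow> \<not> adj E x y"
  by (auto simp: adj_def isolated_def)

lemma component_of_agree_near:
  assumes "graph V E" "k \<in> V" "agree_near E E' (component_of V E k)"
  shows "component_of V E' k = component_of V E k"
proof -
  let ?C = "component_of V E k"
  have adj_iff: "adj E x y \<longleftrightarrow> adj E' x y" if "x \<in> ?C" for x y
  proof -
    have "{x, y} \<inter> ?C \<noteq> {}" using that by blast
    then show ?thesis
      using assms(3) unfolding agree_near_def adj_def by simp
  qed
  have "(adj E')\<^sup>*\<^sup>* k w" if "(adj E)\<^sup>*\<^sup>* k w" for w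
    using that
  proof (induction rule: rtranclp_induct)
    case (step y z)
    have "y \<in> V" using adj_in_V[OF assms(1) step.hyps(2)] by blast
    with step.hyps(1) have "y \<in> ?C" by (simp add: component_of_def)
    with step.hyps(2) have "adj E' y z" by (simp add: adj_iff)
    with step.IH show ?case by (rule rtranclp.rtrancl_into_rtrancl)
  qed simp
  moreover have "w \<in> ?C" if "(adj E')\<^sup>*\<^sup>* k w" for w
    using that
  proof (induction rule: rtranclp_induct)
    case (step y z)
    with adj_iff have "adj E y z" by blast
    with step.IH show ?case by (rule component_of_closed[OF assms(1)])
  qed (rule component_of_self[OF assms(2)])
  ultimately show ?thesis
    unfolding component_of_def by blast
qed

definition bad_root :: "'a set \<Rightarrow> 'a set set \<Rightarrow> 'a \<Rightarrow> bool" where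
  "bad_root V E k \<longleftrightarrow> k \<in> V \<and> (\<exists>y. adj E k y) \<and> loopless_on E (component_of V E k)"

lemma bad_root_agree_near:
  assumes "graph V E" "bad_root V E k" "agree_near E E' (component_of V E k)"
  shows "bad_root V E' k \<and> component_of V E' k = component_of V E k"
proof -
  let ?C = "component_of V E k"
  have k: "k \<in> V" "k \<in> ?C" using assms(2) by (auto simp: bad_root_def component_of_def)
  have C: "component_of V E' k = ?C" by (rule component_of_agree_near[OF assms(1) k(1) assms(3)])
  have "{k, y} \<in> E \<longleftrightarrow> {k, y} \<in> E'" for y
    using assms(3) k(2) unfolding agree_near_def by simp
  then have "\<exists>y. adj E' k y" using assms(2) by (auto simp: bad_root_def adj_def)
  moreover have "looped E x \<longleftrightarrow> looped E' x" if "x \<in> ?C" for x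
    using assms(3) that unfolding agree_near_def looped_def by simp
  then have "loopless_on E' ?C" using assms(2) by (simp add: bad_root_def loopless_on_def)
  ultimately show ?thesis using k(1) C by (simp add: bad_root_def)
qed

lemma no_bad_root_iff:
  assumes "graph V E"
  shows "(\<forall>C. component V E C \<and> loopless_on E C \<longrightarrow> (\<exists>v. C = {v} \<and> isolated E v))
           \<longleftrightarrow> (\<forall>k. \<not> bad_root V E k)"
proof
  assume small: "\<forall>C. component V E C \<and> loopless_on E C \<longrightarrow> (\<exists>v. C = {v} \<and> isolated E v)"
  show "\<forall>k. \<not> bad_root V E k"
  proof (intro allI notI)
    fix k assume "bad_root V E k"
    then have "k \<in> V" "loopless_on E (component_of V E k)" and "\<exists>y. adj E k y"
      by (auto simp: bad_root_def)
    moreover have "component V E (component_of V E k)"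
      using \<open>k \<in> V\<close> unfolding component_def component_of_def by blast
    ultimately obtain v where "component_of V E k = {v}" "isolated E v"
      using small by blast
    with \<open>k \<in> V\<close> have "isolated E k" using component_of_self by fastforce
    with \<open>\<exists>y. adj E k y\<close> show False by (auto simp: adj_def isolated_def)
  qed
next
  assume no_bad: "\<forall>k. \<not> bad_root V E k"
  show "\<forall>C. component V E C \<and> loopless_on E C \<longrightarrow> (\<exists>v. C = {v} \<and> isolated E v)"
  proof (intro allI impI)
    fix C assume C: "component V E C \<and> loopless_on E C"
    then obtain k where k: "k \<in> V" "C = component_of V E k"
      unfolding component_def component_of_def by blast
    with C no_bad have no_adj: "\<not> adj E k y" for y
      by (auto simp: bad_root_def)
    have "C = {k}"
    proof
      show "C \<subseteq> {k}"
        using component_of_subset[OF assms, of k "{k}"] k(2) no_adj by blast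
      show "{k} \<subseteq> C" using component_of_self[OF k(1)] k(2) by simp
    qed
    moreover have "\<not> looped E k"
      using C \<open>C = {k}\<close> by (simp add: loopless_on_def)
    then have "{k, y} \<notin> E" for y
      using no_adj[of y] by (cases "y = k") (auto simp: adj_def looped_def)
    then have "isolated E k" by (simp add: isolated_iff_no_pair[OF assms])
    ultimately show "\<exists>v. C = {v} \<and> isolated E v" by blast
  qed
qed

section \<open>Bad roots survive every lc-sequence\<close>

lemma lc_apply_agree_near:
  assumes "graph V E" "bad_root V E k"
  shows "graph V E' \<Longrightarrow> agree_near E E' (component_of V E k) \<Longrightarrow> lc_applicable V E' vs \<Longrightarrow>
           agree_near E (lc_apply V E' vs) (component_of V E k)"
proof (induction vs arbitrary: E')
  case (Cons v vs)
  let ?K = "component_of V E k"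
  have "looped E' v" using Cons.prems(3) by simp
  have v_notin: "v \<notin> ?K"
  proof
    assume "v \<in> ?K"
    with Cons.prems(2) \<open>looped E' v\<close> have "looped E v"
      unfolding agree_near_def looped_def by simp
    with \<open>v \<in> ?K\<close> assms(2) show False
      by (simp add: bad_root_def loopless_on_def)
  qed
  have "{x, v} \<notin> E'" if "x \<in> ?K" for x
  proof
    assume "{x, v} \<in> E'"
    with Cons.prems(2) that have "{x, v} \<in> E"
      unfolding agree_near_def by simp
    with that v_notin have "adj E x v" by (auto simp: adj_def)
    with that v_notin show False
      using component_of_closed[OF assms(1)] by blast
  qed
  with Cons.prems(1) v_notin have "agree_near E' (lcc V E' v) ?K"
    by (rule lcc_agree_near)
  with Cons.prems(2) have "agree_near E (lcc V E' v) ?K"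
    by (rule agree_near_trans)
  with Cons.prems Cons.IH[OF graph_lcc[OF Cons.prems(1)]] show ?case by simp
qed simp

lemma bad_root_stays_nonisolated:
  assumes "graph V E" "bad_root V E k" "lc_applicable V E vs"
  shows "\<not> isolated (lc_apply V E vs) k"
proof -
  obtain y where "{k, y} \<in> E" using assms(2) by (auto simp: bad_root_def adj_def)
  moreover have "agree_near E (lc_apply V E vs) (component_of V E k)"
    using lc_apply_agree_near[OF assms(1,2) assms(1) _ assms(3)] by (simp add: agree_near_def)
  moreover have "k \<in> component_of V E k"
    using assms(2) by (simp add: bad_root_def component_of_self)
  ultimately have "{k, y} \<in> lc_apply V E vs"
    unfolding agree_near_def by (metis disjoint_iff insertI1)
  then show ?thesis by (auto simp: isolated_def)
qed

section \<open>Choosing a pivot\<close>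

locale bad_lcc_component =
  fixes V :: "'a set" and E :: "'a set set" and v k :: 'a
  assumes graph: "graph V E"
    and no_bad_root: "\<And>k. \<not> bad_root V E k"
    and looped_v: "looped E v"
    and bad_root_lcc: "bad_root V (lcc V E v) k"
begin

abbreviation "K \<equiv> component_of V (lcc V E v) k"

lemma K_subset_V: "K \<subseteq> V"
  by (auto simp: component_of_def)

lemma K_adj:
  assumes "x \<in> K"
  shows "\<exists>y. adj (lcc V E v) x y"
  using component_of_adj[OF _ assms] bad_root_lcc by (simp add: bad_root_def)

lemma v_notin_K: "v \<notin> K"
  by (meson K_adj isolated_lcc_self isolated_not_adj)

lemma looped_iff_nbr_v:
  assumes "x \<in> K"
  shows "looped E x \<longleftrightarrow> {x, v} \<in> E"
proof -
  have "\<not> looped (lcc V E v) x"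
    using bad_root_lcc assms by (simp add: bad_root_def loopless_on_def)
  with assms v_notin_K K_subset_V show ?thesis
    by (auto simp: lcc_looped_iff)
qed

lemma edge_leaving_K:
  assumes "x \<in> K" "y \<in> V" "y \<notin> K"
  shows "{x, y} \<in> E \<longleftrightarrow> {x, v} \<in> E \<and> {y, v} \<in> E"
proof (cases "y = v")
  case True
  with looped_v show ?thesis by (simp add: looped_def)
next
  case False
  have "\<not> adj (lcc V E v) x y"
    using assms component_of_closed[OF graph_lcc[OF graph]] by blast
  moreover have "x \<noteq> y" using assms by blast
  ultimately show ?thesis
    using assms False v_notin_K K_subset_V by (auto simp: lcc_adj_iff)
qed

lemma K_meets_nbhd:
  obtains u where "u \<in> K" "{u, v} \<in> E"
proof -
  have "\<exists>u\<in>K. {u, v} \<in> E"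
  \<comment> \<open>otherwise \<open>*\<^sub>c v\<close> leaves the edges near \<open>K\<close> alone and \<open>k\<close> is already a bad root of \<open>E\<close>\<close>
  proof (rule ccontr)
    assume "\<not> (\<exists>u\<in>K. {u, v} \<in> E)"
    then have "agree_near E (lcc V E v) K"
      using lcc_agree_near[OF graph v_notin_K] by blast
    then have "bad_root V E k"
      using bad_root_agree_near[OF graph_lcc[OF graph] bad_root_lcc]
      by (simp add: agree_near_sym)
    with no_bad_root show False by blast
  qed
  with that show ?thesis by blast
qed

end

locale bad_lcc_component_pivot = bad_lcc_component +
  fixes u :: 'a
  assumes u_in_K: "u \<in> K" and u_nbr_v: "{u, v} \<in> E"
begin

lemma looped_u: "looped E u"
  using looped_iff_nbr_v u_in_K u_nbr_v by blast

lemma nbr_u_iff_nbr_v: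
  assumes "z \<in> V" "z \<notin> K"
  shows "{z, u} \<in> E \<longleftrightarrow> {z, v} \<in> E"
  using edge_leaving_K[OF u_in_K assms] u_nbr_v by (simp add: insert_commute)

lemma lcc_u_edge_leaving_K:
  assumes "x \<in> K" "x \<noteq> u" "z \<in> V" "z \<notin> K"
  shows "{x, z} \<in> lcc V E u \<longleftrightarrow> {z, v} \<in> E \<and> (({x, v} \<in> E) \<noteq> ({x, u} \<in> E))"
proof -
  have "z \<noteq> u" using assms u_in_K by blast
  then show ?thesis
    using assms K_subset_V edge_leaving_K[OF assms(1,3,4)] nbr_u_iff_nbr_v[OF assms(3,4)]
    by (auto simp: lcc_pair_iff)
qed

lemma lcc_u_looped_K:
  assumes "x \<in> K" "x \<noteq> u"
  shows "looped (lcc V E u) x \<longleftrightarrow> ({x, v} \<in> E) \<noteq> ({x, u} \<in> E)"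
  using assms K_subset_V looped_iff_nbr_v by (auto simp: lcc_looped_iff)

lemma lcc_u_eq_lcc_v_outside_K:
  assumes "x \<in> V" "x \<notin> K" "y \<in> V" "y \<notin> K"
  shows "{x, y} \<in> lcc V E u \<longleftrightarrow> {x, y} \<in> lcc V E v"
  using assms u_in_K u_nbr_v nbr_u_iff_nbr_v[OF assms(1,2)] nbr_u_iff_nbr_v[OF assms(3,4)]
  by (auto simp: lcc_pair_iff insert_commute)

context
  fixes k' :: 'a
  assumes bad_root_lcc_u: "bad_root V (lcc V E u) k'"
begin

abbreviation "K' \<equiv> component_of V (lcc V E u) k'"

lemma K'_adj:
  assumes "x \<in> K'"
  shows "\<exists>y. adj (lcc V E u) x y"
  using component_of_adj[OF _ assms] bad_root_lcc_u by (simp add: bad_root_def)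

lemma u_notin_K': "u \<notin> K'"
  by (meson K'_adj isolated_lcc_self isolated_not_adj)

lemma no_edge_from_K'_leaving_K:
  assumes "x \<in> K'" "x \<in> K" "z \<notin> K"
  shows "{x, z} \<notin> lcc V E u"
proof (cases "z \<in> V")
  case True
  have "x \<noteq> u" using assms(1) u_notin_K' by blast
  moreover have "\<not> looped (lcc V E u) x"
    using bad_root_lcc_u assms(1) by (simp add: bad_root_def loopless_on_def)
  ultimately show ?thesis
    using assms True lcc_u_looped_K lcc_u_edge_leaving_K by blast
qed (simp add: lcc_pair_iff)

lemma K'_subset_or_disjoint: "K' \<subseteq> K \<or> K' \<inter> K = {}"
proof (cases "k' \<in> K")
  case True
  have "K' \<subseteq> K"
  proof (rule component_of_subset[OF graph_lcc[OF graph] True])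
    fix x y assume "x \<in> K'" "x \<in> K" "adj (lcc V E u) x y"
    then show "y \<in> K"
      using no_edge_from_K'_leaving_K by (auto simp: adj_def)
  qed
  then show ?thesis ..
next
  case False
  have "K' \<subseteq> - K"
  proof (rule component_of_subset[OF graph_lcc[OF graph]])
    show "k' \<in> - K" using False by simp
    fix x y assume "x \<in> K'" "x \<in> - K" "adj (lcc V E u) x y"
    moreover from this have "y \<in> K'"
      using component_of_closed[OF graph_lcc[OF graph]] by blast
    ultimately show "y \<in> - K"
      using no_edge_from_K'_leaving_K[of y x] by (auto simp: adj_def insert_commute)
  qed
  then show ?thesis by blast
qed

text \<open>If \<open>K'\<close> avoided \<open>K\<close>, it would also be a bad component of \<open>H *\<^sub>c v\<close>, hence contain
  a neighbour \<open>y\<close> of \<open>v\<close>. Then every \<open>x \<in> K\<close> is adjacent to \<open>v\<close> iff to \<open>u\<close>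
  (else \<open>x\<close> and \<open>y\<close> become adjacent in \<open>H *\<^sub>c u\<close>), which makes \<open>u\<close> isolated
  in \<open>H *\<^sub>c v\<close>.\<close>

lemma K'_meets_K: "K' \<inter> K \<noteq> {}"
proof
  assume disjoint: "K' \<inter> K = {}"
  have K'_outside: "x \<in> V \<and> x \<notin> K" if "x \<in> K'" for x
    using that disjoint by (auto simp: component_of_def)
  have "agree_near (lcc V E u) (lcc V E v) K'"
  proof (rule agree_nearI[OF graph_lcc[OF graph] graph_lcc[OF graph]])
    fix x y assume "x \<in> K'"
    then have x: "x \<in> V" "x \<notin> K" using K'_outside by auto
    consider "y \<in> V" "y \<notin> K" | "y \<in> K" | "y \<notin> V" by blast
    then show "{x, y} \<in> lcc V E u \<longleftrightarrow> {x, y} \<in> lcc V E v"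
    proof cases
      case 1
      with x show ?thesis by (rule lcc_u_eq_lcc_v_outside_K)
    next
      case 2
      have "{x, y} \<notin> lcc V E u"
      proof
        assume "{x, y} \<in> lcc V E u"
        with 2 x have "adj (lcc V E u) x y" by (auto simp: adj_def)
        with \<open>x \<in> K'\<close> have "y \<in> K'"
          using component_of_closed[OF graph_lcc[OF graph]] by blast
        with 2 disjoint show False by blast
      qed
      moreover have "{x, y} \<notin> lcc V E v"
      proof
        assume "{x, y} \<in> lcc V E v"
        with 2 x have "adj (lcc V E v) y x" by (auto simp: adj_def insert_commute)
        with 2 x show False
          using component_of_closed[OF graph_lcc[OF graph]] by blast
      qed
      ultimately show ?thesis by blast
    next
      case 3
      then show ?thesis by (simp add: lcc_pair_iff)
    qed
  qed
  then have "bad_root V (lcc V E v) k'" and K'_eq: "component_of V (lcc V E v) k' = K'"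
    using bad_root_agree_near[OF graph_lcc[OF graph] bad_root_lcc_u] by auto
  then interpret other: bad_lcc_component V E v k'
    by unfold_locales (use graph no_bad_root looped_v in auto)
  obtain y where "y \<in> K'" "{y, v} \<in> E"
    using other.K_meets_nbhd K'_eq by metis
  then have y: "y \<in> V" "y \<notin> K" "{y, v} \<in> E" using K'_outside by auto
  have same_nbr: "{x, v} \<in> E \<longleftrightarrow> {x, u} \<in> E" if "x \<in> K" for x
  proof (cases "x = u")
    case True
    with u_nbr_v looped_u show ?thesis by (simp add: looped_def)
  next
    case False
    show ?thesis
    proof (rule ccontr)
      assume "({x, v} \<in> E) \<noteq> ({x, u} \<in> E)"
      with that False y have "{x, y} \<in> lcc V E u"
        by (simp add: lcc_u_edge_leaving_K)
      with that y have "adj (lcc V E u) y x" by (auto simp: adj_def insert_commute)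
      with \<open>y \<in> K'\<close> have "x \<in> K'"
        using component_of_closed[OF graph_lcc[OF graph]] by blast
      with that disjoint show False by blast
    qed
  qed
  obtain w where w: "adj (lcc V E v) u w" using K_adj[OF u_in_K] by blast
  then have "w \<in> K"
    using component_of_closed[OF graph_lcc[OF graph] u_in_K] by blast
  with w u_nbr_v same_nbr[of w] show False
    by (auto simp: lcc_adj_iff insert_commute)
qed

lemma K'_subset_K_minus_u: "K' \<subseteq> K - {u}"
  using K'_subset_or_disjoint K'_meets_K u_notin_K' by blast

end

end

lemma exists_good_pivot:
  assumes "graph V E" "\<forall>k. \<not> bad_root V E k" "looped E v\<^sub>0"
  shows "\<exists>v. looped E v \<and> (\<forall>k. \<not> bad_root V (lcc V E v) k)"
proof (rule ccontr)
  assume none: "\<not> ?thesis"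
  define P where "P n \<longleftrightarrow>
    (\<exists>v k. looped E v \<and> bad_root V (lcc V E v) k \<and> card (component_of V (lcc V E v) k) = n)" for n
  from none assms(3) obtain k\<^sub>0 where "bad_root V (lcc V E v\<^sub>0) k\<^sub>0" by blast
  with assms(3) have "\<exists>n. P n" unfolding P_def by blast
  then obtain n where "P n" and smaller: "\<And>m. m < n \<Longrightarrow> \<not> P m"
    unfolding exists_least_iff[of P] by blast
  then obtain v k where "looped E v" "bad_root V (lcc V E v) k"
    and n: "card (component_of V (lcc V E v) k) = n"
    unfolding P_def by blast
  then interpret bad_lcc_component V E v k
    using assms by unfold_locales auto
  obtain u where "u \<in> K" "{u, v} \<in> E" by (rule K_meets_nbhd)
  then interpret bad_lcc_component_pivot V E v k u
    by unfold_locales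
  obtain k' where bad': "bad_root V (lcc V E u) k'"
    using none looped_u by blast
  have "finite K"
    using K_subset_V assms(1) by (auto simp: graph_def intro: finite_subset)
  then have "card (component_of V (lcc V E u) k') \<le> card (K - {u})"
    using K'_subset_K_minus_u[OF bad'] by (intro card_mono) auto
  also have "\<dots> < n"
    using card_Diff1_less[OF \<open>finite K\<close> u_in_K] n by simp
  finally have "card (component_of V (lcc V E u) k') < n" .
  with bad' looped_u smaller show False
    unfolding P_def by blast
qed

lemma isolated_notin_applicable:
  "isolated E w \<Longrightarrow> lc_applicable V E vs \<Longrightarrow> w \<notin> set vs"
proof (induction vs arbitrary: E)
  case (Cons v vs)
  then have "w \<noteq> v" by (auto simp: isolated_def looped_def)
  moreover have "w \<notin> set vs"
    using Cons.IH[of "lcc V E v"] Cons.prems isolated_lcc[OF Cons.prems(1), of V v] by simp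
  ultimately show ?case by simp
qed simp

lemma exists_looped_vertex:
  assumes "graph V E" "\<forall>k. \<not> bad_root V E k" "x \<in> V" "\<not> isolated E x"
  shows "\<exists>v. looped E v"
proof -
  obtain y where "{x, y} \<in> E"
    using assms(4) isolated_iff_no_pair[OF assms(1)] by blast
  show ?thesis
  proof (cases "y = x")
    case True
    with \<open>{x, y} \<in> E\<close> show ?thesis by (auto simp: looped_def)
  next
    case False
    with \<open>{x, y} \<in> E\<close> have "adj E x y" by (simp add: adj_def)
    with assms(2,3) have "\<not> loopless_on E (component_of V E x)"
      by (auto simp: bad_root_def)
    then show ?thesis by (auto simp: loopless_on_def)
  qed
qed

lemma full_lc_sequence_exists:
  "graph V E \<Longrightarrow> \<forall>k. \<not> bad_root V E k \<Longrightarrow> \<exists>vs. full_lc_sequence V E vs"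
proof (induction "card {x \<in> V. \<not> isolated E x}" arbitrary: E rule: less_induct)
  case less
  show ?case
  proof (cases "\<forall>x\<in>V. isolated E x")
    case True
    then have "full_lc_sequence V E []"
      by (simp add: full_lc_sequence_def lc_sequence_def)
    then show ?thesis ..
  next
    case False
    then obtain x where "x \<in> V" "\<not> isolated E x" by blast
    then obtain v\<^sub>0 where "looped E v\<^sub>0"
      using exists_looped_vertex[OF less.prems] by blast
    then obtain v where v: "looped E v" and good: "\<forall>k. \<not> bad_root V (lcc V E v) k"
      using exists_good_pivot[OF less.prems] by blast
    have "v \<in> V" "\<not> isolated E v"
      using v graph_pair_in_V[OF less.prems(1), of v v] by (auto simp: looped_def isolated_def)
    moreover have "finite {x \<in> V. \<not> isolated E x}"
      using less.prems(1) by (simp add: graph_def)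
    moreover have "{x \<in> V. \<not> isolated (lcc V E v) x} \<subseteq> {x \<in> V. \<not> isolated E x} - {v}"
      using isolated_lcc[of E _ V v] isolated_lcc_self[of V E v] by blast
    ultimately have "card {x \<in> V. \<not> isolated (lcc V E v) x} < card {x \<in> V. \<not> isolated E x}"
      by (metis (no_types, lifting) card_Diff1_less card_mono finite_Diff le_less_trans mem_Collect_eq)
    then obtain vs where "full_lc_sequence V (lcc V E v) vs"
      using less.hyps[OF _ graph_lcc[OF less.prems(1)] good] by blast
    moreover have "v \<notin> set vs"
      using calculation isolated_notin_applicable[OF isolated_lcc_self[of V E v], of V vs]
      by (auto simp: full_lc_sequence_def lc_sequence_def)
    ultimately have "full_lc_sequence V E (v # vs)"
      using v \<open>v \<in> V\<close> by (simp add: full_lc_sequence_def lc_sequence_def)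
    then show ?thesis ..
  qed
qed

lemma full_lc_sequence_no_bad_root:
  assumes "graph V E" "full_lc_sequence V E vs"
  shows "\<not> bad_root V E k"
proof
  assume bad: "bad_root V E k"
  with assms have "isolated (lc_apply V E vs) k"
    by (simp add: full_lc_sequence_def bad_root_def)
  moreover have "lc_applicable V E vs"
    using assms(2) by (simp add: full_lc_sequence_def lc_sequence_def)
  ultimately show False
    using bad_root_stays_nonisolated[OF assms(1) bad] by blast
qed

theorem mainTheorem6:
  assumes "graph V E"
  shows "(\<exists>vs. full_lc_sequence V E vs) \<longleftrightarrow>
         (\<forall>C. component V E C \<and> loopless_on E C \<longrightarrow> (\<exists>v. C = {v} \<and> isolated E v))"
  unfolding no_bad_root_iff[OF assms]
  using full_lc_sequence_no_bad_root[OF assms] full_lc_sequence_exists[OF assms] by blast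

end
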